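(* Let $A$ and $B$ be finite-dimensional Hilbert spaces. For any $\sigma\in\mathrm{S}(A)$, any $\rho\in\mathrm{S}_\sigma(A)$ and any $\mathcal{N}\in\mathrm{TPCP}(A,B)$, the function $\mathrm{TPCP}(B,A)\ni\mathcal{T}\mapsto\Delta_{\mathcal{T},\sigma,\mathcal{N}}(\rho)$, where \[ \Delta_{\mathcal{T},\sigma,\mathcal{N}}(\rho):=D(\rho\|\sigma)-D\bigl(\mathcal{N}(\rho)\|\mathcal{N}(\sigma)\bigr)-D_{\mathbb{M}}\bigl(\rho\,\|\,(\mathcal{T}\circ\mathcal{N})(\rho)\bigr), \] is upper semicontinuous.
   Context: $\mathrm{S}(A)$: density operators on $A$; $\mathrm{TPCP}(A,B)$: quantum channels from $A$ to $B$. $\mathrm{S}_\sigma(A):=\{\rho\in\mathrm{S}(A):\mathrm{supp}(\rho)\subseteq\mathrm{supp}(\sigma)\}$. $D(\rho\|\sigma):=\mathrm{tr}(\rho(\log\rho-\log\sigma))$ if $\mathrm{supp}(\rho)\subseteq\mathrm{supp}(\sigma)$, $+\infty$ otherwise. $D_{\mathbb{M}}(\rho\|\tau):=\sup D(\mathcal{M}(\rho)\|\mathcal{M}(\tau))$ over all finite POVMs $\{M_x\}$ with $\mathcal{M}(\omega)=\sum_x\mathrm{tr}(\omega M_x)|x\rangle\langle x|$. *)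

theory Defs
  imports Complex_Main "Jordan_Normal_Form.Matrix" "HOL-Library.Extended_Real"
begin

section \<open>Finite-dimensional quantum states and channels (A = C^n, B = C^m)\<close>

definition mtrace :: "complex mat \<Rightarrow> complex" where
  "mtrace A = (\<Sum>i<dim_row A. A $$ (i, i))"

definition cadj :: "complex mat \<Rightarrow> complex mat" where
  "cadj A = mat (dim_col A) (dim_row A) (\<lambda>(i, j). cnj (A $$ (j, i)))"

definition cinner :: "complex vec \<Rightarrow> complex vec \<Rightarrow> complex" where
  "cinner v w = (\<Sum>i<dim_vec v. cnj (v $ i) * w $ i)"

definition hermitian :: "nat \<Rightarrow> complex mat \<Rightarrow> bool" where
  "hermitian n A \<longleftrightarrow> A \<in> carrier_mat n n \<and> cadj A = A"

definition psd :: "nat \<Rightarrow> complex mat \<Rightarrow> bool" where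
  "psd n A \<longleftrightarrow> hermitian n A \<and> (\<forall>v \<in> carrier_vec n. 0 \<le> Re (cinner v (A *\<^sub>v v)))"

definition density :: "nat \<Rightarrow> complex mat \<Rightarrow> bool" where
  "density n \<rho> \<longleftrightarrow> psd n \<rho> \<and> mtrace \<rho> = 1"

definition supp :: "complex mat \<Rightarrow> complex vec set" where
  "supp A = {A *\<^sub>v v | v. v \<in> carrier_vec (dim_col A)}"

definition unitary :: "nat \<Rightarrow> complex mat \<Rightarrow> bool" where
  "unitary n U \<longleftrightarrow> U \<in> carrier_mat n n \<and> U * cadj U = 1\<^sub>m n \<and> cadj U * U = 1\<^sub>m n"

definition rdiag :: "nat \<Rightarrow> (nat \<Rightarrow> real) \<Rightarrow> complex mat" where
  "rdiag n d = mat n n (\<lambda>(i, j). if i = j then complex_of_real (d i) else 0)"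

text \<open>Matrix logarithm of a positive semidefinite operator via its spectral decomposition,
  with the usual convention that the logarithm is taken on the support (log 0 := 0 on the kernel).\<close>
definition mat_log :: "complex mat \<Rightarrow> complex mat" where
  "mat_log A = (SOME L. \<exists>U d. unitary (dim_row A) U \<and> A = U * rdiag (dim_row A) d * cadj U \<and>
       L = U * rdiag (dim_row A) (\<lambda>i. if d i > 0 then ln (d i) else 0) * cadj U)"

definition qrel_ent :: "complex mat \<Rightarrow> complex mat \<Rightarrow> ereal" where
  "qrel_ent \<rho> \<sigma> = (if supp \<rho> \<subseteq> supp \<sigma>
      then ereal (Re (mtrace (\<rho> * (mat_log \<rho> - mat_log \<sigma>)))) else \<infinity>)"

definition povm :: "nat \<Rightarrow> nat \<Rightarrow> (nat \<Rightarrow> complex mat) \<Rightarrow> bool" where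
  "povm n k M \<longleftrightarrow> (\<forall>x<k. psd n (M x)) \<and>
     (\<forall>i<n. \<forall>j<n. (\<Sum>x<k. M x $$ (i, j)) = (1\<^sub>m n) $$ (i, j))"

definition meas :: "nat \<Rightarrow> (nat \<Rightarrow> complex mat) \<Rightarrow> complex mat \<Rightarrow> complex mat" where
  "meas k M \<omega> = mat k k (\<lambda>(x, y). if x = y then mtrace (\<omega> * M x) else 0)"

definition meas_rel_ent :: "nat \<Rightarrow> complex mat \<Rightarrow> complex mat \<Rightarrow> ereal" where
  "meas_rel_ent n \<rho> \<tau> = (SUP (k, M) \<in> {(k, M). povm n k M}. qrel_ent (meas k M \<rho>) (meas k M \<tau>))"

text \<open>(id_k \<otimes> N)(X) for X a k x k block matrix with n x n blocks\<close>
definition blockapply :: "nat \<Rightarrow> nat \<Rightarrow> nat \<Rightarrow> (complex mat \<Rightarrow> complex mat) \<Rightarrow> complex mat \<Rightarrow> complex mat" where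
  "blockapply k n m N X = mat (k * m) (k * m) (\<lambda>(p, q).
      N (mat n n (\<lambda>(a, b). X $$ ((p div m) * n + a, (q div m) * n + b))) $$ (p mod m, q mod m))"

definition channel :: "nat \<Rightarrow> nat \<Rightarrow> (complex mat \<Rightarrow> complex mat) \<Rightarrow> bool" where
  "channel n m N \<longleftrightarrow>
     (\<forall>X \<in> carrier_mat n n. N X \<in> carrier_mat m m) \<and>
     (\<forall>X \<in> carrier_mat n n. \<forall>Y \<in> carrier_mat n n. N (X + Y) = N X + N Y) \<and>
     (\<forall>X \<in> carrier_mat n n. \<forall>c. N (c \<cdot>\<^sub>m X) = c \<cdot>\<^sub>m N X) \<and>
     (\<forall>X \<in> carrier_mat n n. mtrace (N X) = mtrace X) \<and>
     (\<forall>k. \<forall>X. psd (k * n) X \<longrightarrow> psd (k * m) (blockapply k n m N X))"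

definition mat_unit :: "nat \<Rightarrow> nat \<Rightarrow> nat \<Rightarrow> complex mat" where
  "mat_unit n a b = mat n n (\<lambda>(i, j). if i = a \<and> j = b then 1 else 0)"

text \<open>a norm distance on linear maps C^{n x n} -> C^{m x m} (all norms are equivalent)\<close>
definition chan_dist :: "nat \<Rightarrow> nat \<Rightarrow> (complex mat \<Rightarrow> complex mat) \<Rightarrow> (complex mat \<Rightarrow> complex mat) \<Rightarrow> real" where
  "chan_dist n m T T' = (\<Sum>a<n. \<Sum>b<n. \<Sum>i<m. \<Sum>j<m.
      cmod (T (mat_unit n a b) $$ (i, j) - T' (mat_unit n a b) $$ (i, j)))"

definition usc_on :: "'a set \<Rightarrow> ('a \<Rightarrow> 'a \<Rightarrow> real) \<Rightarrow> ('a \<Rightarrow> ereal) \<Rightarrow> bool" where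
  "usc_on S d f \<longleftrightarrow> (\<forall>x \<in> S. \<forall>c. f x < c \<longrightarrow> (\<exists>\<delta>>0. \<forall>y \<in> S. d x y < \<delta> \<longrightarrow> f y < c))"

definition Delta :: "nat \<Rightarrow> (complex mat \<Rightarrow> complex mat) \<Rightarrow> complex mat \<Rightarrow> (complex mat \<Rightarrow> complex mat)
     \<Rightarrow> complex mat \<Rightarrow> ereal" where
  "Delta n T \<sigma> N \<rho> = qrel_ent \<rho> \<sigma> - qrel_ent (N \<rho>) (N \<sigma>) - meas_rel_ent n \<rho> (T (N \<rho>))"

end

theory Submission
  imports Defs
begin

text \<open>Only the positivity of \<open>\<rho>\<close> and of the channel \<open>N\<close> matters: the first two terms of
  \<open>\<Delta>\<close> do not depend on \<open>T\<close>, so it suffices that \<open>T \<mapsto> D\<^sub>M(\<rho>\<parallel>T(N\<rho>))\<close> is lower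
  semicontinuous. For a fixed POVM both measured states are diagonal, and
  \<open>D(M(\<rho>)\<parallel>M(T(N\<rho>))) = \<Sum>\<^sub>x p\<^sub>x log (p\<^sub>x / q\<^sub>x(T))\<close> with \<open>q\<^sub>x(T) = tr(T(N\<rho>) M\<^sub>x) \<ge> 0\<close>
  depending linearly on the coordinates of \<open>T\<close>. As \<open>t \<mapsto> p log (p / t)\<close> is continuous from
  \<open>[0, \<infinity>)\<close> into the extended reals, each measured relative entropy is continuous in \<open>T\<close>, and
  \<open>D\<^sub>M\<close>, a supremum of continuous functions, is lower semicontinuous. That the measured states are
  probability vectors rests on \<open>tr(A B) \<ge> 0\<close> for positive semidefinite \<open>A\<close>, \<open>B\<close>, which is
  proved by splitting rank-one parts off \<open>B\<close> through Schur complements.\<close>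

section \<open>Relative entropy of diagonal states\<close>

lemma index_mult_mat_sum:
  fixes A B :: "'a::comm_ring_1 mat"
  assumes "A \<in> carrier_mat n k" "B \<in> carrier_mat k l" "i < n" "j < l"
  shows "(A * B) $$ (i, j) = (\<Sum>t<k. A $$ (i, t) * B $$ (t, j))"
  using assms by (auto simp: scalar_prod_def lessThan_atLeast0 intro!: sum.cong)

lemma rdiag_carrier [simp]: "rdiag n d \<in> carrier_mat n n"
  by (simp add: rdiag_def)

lemma rdiag_dims [simp]: "dim_row (rdiag n d) = n" "dim_col (rdiag n d) = n"
  by (simp_all add: rdiag_def)

lemma cadj_carrier [simp]: "U \<in> carrier_mat n k \<Longrightarrow> cadj U \<in> carrier_mat k n"
  by (simp add: cadj_def)

lemma cadj_one: "cadj (1\<^sub>m n) = (1\<^sub>m n :: complex mat)"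
  by (rule eq_matI) (auto simp: cadj_def)

lemma unitary_one: "unitary n (1\<^sub>m n)"
  by (simp add: unitary_def cadj_one)

lemma index_mult_rdiag_right:
  assumes "U \<in> carrier_mat n n" "i < n" "j < n"
  shows "(U * rdiag n d) $$ (i, j) = U $$ (i, j) * complex_of_real (d j)"
proof -
  have "(U * rdiag n d) $$ (i, j) = (\<Sum>t<n. U $$ (i, t) * rdiag n d $$ (t, j))"
    using assms by (intro index_mult_mat_sum) auto
  also have "\<dots> = (\<Sum>t\<in>{j}. U $$ (i, t) * rdiag n d $$ (t, j))"
    using assms by (intro sum.mono_neutral_right) (auto simp: rdiag_def)
  finally show ?thesis using assms by (simp add: rdiag_def)
qed

lemma index_mult_rdiag_left:
  assumes "U \<in> carrier_mat n n" "i < n" "j < n"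
  shows "(rdiag n d * U) $$ (i, j) = complex_of_real (d i) * U $$ (i, j)"
proof -
  have "(rdiag n d * U) $$ (i, j) = (\<Sum>t<n. rdiag n d $$ (i, t) * U $$ (t, j))"
    using assms by (intro index_mult_mat_sum) auto
  also have "\<dots> = (\<Sum>t\<in>{i}. rdiag n d $$ (i, t) * U $$ (t, j))"
    using assms by (intro sum.mono_neutral_right) (auto simp: rdiag_def)
  finally show ?thesis using assms by (simp add: rdiag_def)
qed

lemma index_rdiag_mult_vec:
  assumes "v \<in> carrier_vec n" "i < n"
  shows "(rdiag n d *\<^sub>v v) $ i = complex_of_real (d i) * v $ i"
proof -
  have "(rdiag n d *\<^sub>v v) $ i = (\<Sum>t<n. rdiag n d $$ (i, t) * v $ t)"
    using assms by (auto simp: scalar_prod_def lessThan_atLeast0 intro!: sum.cong)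
  also have "\<dots> = (\<Sum>t\<in>{i}. rdiag n d $$ (i, t) * v $ t)"
    using assms by (intro sum.mono_neutral_right) (auto simp: rdiag_def)
  finally show ?thesis using assms by (simp add: rdiag_def)
qed

text \<open>If a unitary conjugates one real diagonal matrix into another, it only mixes coordinates
  carrying equal eigenvalues, so it also conjugates any function of the one into the same function
  of the other. This makes the choice in \<open>mat_log\<close> irrelevant on diagonal matrices.\<close>

lemma unitary_conj_rdiag_fun:
  assumes U: "unitary n U" and eq: "rdiag n e = U * rdiag n d * cadj U"
  shows "U * rdiag n (\<lambda>i. f (d i)) * cadj U = rdiag n (\<lambda>i. f (e i))"
proof -
  have Uc: "U \<in> carrier_mat n n" and UU: "cadj U * U = 1\<^sub>m n" and UU': "U * cadj U = 1\<^sub>m n"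
    using U by (auto simp: unitary_def)
  have Ac: "cadj U \<in> carrier_mat n n" using Uc by simp
  have "rdiag n e * U = U * rdiag n d * cadj U * U" using eq by simp
  also have "\<dots> = U * rdiag n d * (cadj U * U)"
    using Uc Ac by (meson assoc_mult_mat mult_carrier_mat rdiag_carrier)
  also have "\<dots> = U * rdiag n d" using UU Uc by simp
  finally have intertwine: "rdiag n e * U = U * rdiag n d" .
  have intertwine_f: "rdiag n (\<lambda>i. f (e i)) * U = U * rdiag n (\<lambda>i. f (d i))"
  proof (rule eq_matI)
    fix i j assume "i < dim_row (U * rdiag n (\<lambda>i. f (d i)))" "j < dim_col (U * rdiag n (\<lambda>i. f (d i)))"
    hence i: "i < n" and j: "j < n" using Uc by auto
    have "complex_of_real (e i) * U $$ (i, j) = U $$ (i, j) * complex_of_real (d j)"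
      using arg_cong[OF intertwine, of "\<lambda>A. A $$ (i, j)"]
        index_mult_rdiag_left[OF Uc i j] index_mult_rdiag_right[OF Uc i j] by simp
    hence "U $$ (i, j) = 0 \<or> e i = d j" by (auto simp: mult.commute)
    thus "(rdiag n (\<lambda>i. f (e i)) * U) $$ (i, j) = (U * rdiag n (\<lambda>i. f (d i))) $$ (i, j)"
      using index_mult_rdiag_left[OF Uc i j] index_mult_rdiag_right[OF Uc i j]
      by (auto simp: mult.commute)
  qed (use Uc in auto)
  have "U * rdiag n (\<lambda>i. f (d i)) * cadj U = rdiag n (\<lambda>i. f (e i)) * U * cadj U"
    using intertwine_f by simp
  also have "\<dots> = rdiag n (\<lambda>i. f (e i)) * (U * cadj U)"
    using Uc Ac by (meson assoc_mult_mat rdiag_carrier)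
  also have "\<dots> = rdiag n (\<lambda>i. f (e i))" using UU' by simp
  finally show ?thesis .
qed

lemma mat_log_rdiag:
  "mat_log (rdiag n e) = rdiag n (\<lambda>i. if e i > 0 then ln (e i) else 0)"
proof -
  let ?f = "\<lambda>t::real. if t > 0 then ln t else 0"
  let ?P = "\<lambda>L. \<exists>U d. unitary n U \<and> rdiag n e = U * rdiag n d * cadj U \<and>
       L = U * rdiag n (\<lambda>i. ?f (d i)) * cadj U"
  have "?P (rdiag n (\<lambda>i. ?f (e i)))"
    by (intro exI[of _ "1\<^sub>m n"] exI[of _ e]) (simp add: unitary_one cadj_one)
  from someI[of ?P, OF this] obtain U d where U: "unitary n U"
    and eq: "rdiag n e = U * rdiag n d * cadj U"
    and L: "(SOME L. ?P L) = U * rdiag n (\<lambda>i. ?f (d i)) * cadj U" by blast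
  show ?thesis
    unfolding mat_log_def rdiag_dims L using unitary_conj_rdiag_fun[OF U eq, of ?f] by simp
qed

lemma supp_rdiag_subset_iff:
  "supp (rdiag n p) \<subseteq> supp (rdiag n q) \<longleftrightarrow> (\<forall>x<n. p x \<noteq> 0 \<longrightarrow> q x \<noteq> 0)"
proof
  assume sub: "supp (rdiag n p) \<subseteq> supp (rdiag n q)"
  show "\<forall>x<n. p x \<noteq> 0 \<longrightarrow> q x \<noteq> 0"
  proof (intro allI impI notI)
    fix x assume x: "x < n" "p x \<noteq> 0" "q x = 0"
    have "rdiag n p *\<^sub>v unit_vec n x \<in> supp (rdiag n p)"
      unfolding supp_def by auto
    with sub obtain w where w: "w \<in> carrier_vec n" "rdiag n p *\<^sub>v unit_vec n x = rdiag n q *\<^sub>v w"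
      unfolding supp_def by auto
    have "(rdiag n p *\<^sub>v unit_vec n x) $ x = (rdiag n q *\<^sub>v w) $ x" using w by simp
    thus False
      using x index_rdiag_mult_vec[OF w(1) x(1), of q] index_rdiag_mult_vec[of "unit_vec n x" n x p]
      by simp
  qed
next
  assume pq: "\<forall>x<n. p x \<noteq> 0 \<longrightarrow> q x \<noteq> 0"
  show "supp (rdiag n p) \<subseteq> supp (rdiag n q)"
  proof
    fix y assume "y \<in> supp (rdiag n p)"
    then obtain v where v: "v \<in> carrier_vec n" "y = rdiag n p *\<^sub>v v" unfolding supp_def by auto
    define w where "w = vec n (\<lambda>i. if q i = 0 then 0 else complex_of_real (p i / q i) * v $ i)"
    have wc: "w \<in> carrier_vec n" by (simp add: w_def)
    have "rdiag n q *\<^sub>v w = y"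
    proof (rule eq_vecI)
      fix i assume "i < dim_vec y"
      hence i: "i < n" using v by simp
      show "(rdiag n q *\<^sub>v w) $ i = y $ i"
        unfolding v(2) index_rdiag_mult_vec[OF wc i] index_rdiag_mult_vec[OF v(1) i]
        using pq i by (auto simp: w_def)
    qed (use v in simp)
    thus "y \<in> supp (rdiag n q)" unfolding supp_def using wc by auto
  qed
qed

lemma mtrace_rdiag_mult:
  assumes "C \<in> carrier_mat n n"
  shows "mtrace (rdiag n d * C) = (\<Sum>i<n. complex_of_real (d i) * C $$ (i, i))"
  unfolding mtrace_def using assms index_mult_rdiag_left[OF assms] by (auto intro!: sum.cong)

definition kl_term :: "real \<Rightarrow> real \<Rightarrow> ereal" where
  "kl_term p q = (if p = 0 then 0 else if q = 0 then \<infinity> else ereal (p * (ln p - ln q)))"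

lemma kl_term_not_MInfty [simp]: "kl_term p q \<noteq> -\<infinity>"
  by (simp add: kl_term_def)

lemma qrel_ent_rdiag:
  assumes "\<And>x. x < n \<Longrightarrow> 0 \<le> p x" "\<And>x. x < n \<Longrightarrow> 0 \<le> q x"
  shows "qrel_ent (rdiag n p) (rdiag n q) = (\<Sum>x<n. kl_term (p x) (q x))"
proof (cases "\<forall>x<n. p x \<noteq> 0 \<longrightarrow> q x \<noteq> 0")
  case True
  let ?lg = "\<lambda>t::real. if t > 0 then ln t else 0"
  have diff: "rdiag n (\<lambda>i. ?lg (p i)) - rdiag n (\<lambda>i. ?lg (q i)) = rdiag n (\<lambda>i. ?lg (p i) - ?lg (q i))"
    by (rule eq_matI) (auto simp: rdiag_def)
  have "mtrace (rdiag n p * rdiag n (\<lambda>i. ?lg (p i) - ?lg (q i))) =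
      (\<Sum>i<n. complex_of_real (p i * (?lg (p i) - ?lg (q i))))"
    by (subst mtrace_rdiag_mult) (auto simp: rdiag_def intro!: sum.cong)
  also have "\<dots> = (\<Sum>i<n. complex_of_real (real_of_ereal (kl_term (p i) (q i))))"
    using True assms by (intro sum.cong refl) (force simp: kl_term_def)
  finally have "Re (mtrace (rdiag n p * rdiag n (\<lambda>i. ?lg (p i) - ?lg (q i)))) =
      (\<Sum>i<n. real_of_ereal (kl_term (p i) (q i)))" by (simp add: Re_sum)
  moreover have "(\<Sum>x<n. kl_term (p x) (q x)) = (\<Sum>x<n. ereal (real_of_ereal (kl_term (p x) (q x))))"
    using True by (intro sum.cong) (auto simp: kl_term_def)
  ultimately show ?thesis
    using True unfolding qrel_ent_def supp_rdiag_subset_iff mat_log_rdiag diff by simp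
next
  case False
  then obtain x where "x < n" "p x \<noteq> 0" "q x = 0" by auto
  hence "(\<Sum>x<n. kl_term (p x) (q x)) = \<infinity>"
    unfolding sum_Pinfty by (auto simp: kl_term_def)
  thus ?thesis using False unfolding qrel_ent_def supp_rdiag_subset_iff by auto
qed


section \<open>The trace pairing of positive semidefinite matrices\<close>

text \<open>Matrices are handled here as index functions, so that Schur complements need no carrier
  bookkeeping.\<close>

definition hermitian_fun :: "nat \<Rightarrow> (nat \<Rightarrow> nat \<Rightarrow> complex) \<Rightarrow> bool" where
  "hermitian_fun n B \<longleftrightarrow> (\<forall>i<n. \<forall>j<n. B i j = cnj (B j i))"

definition sesq_form :: "nat \<Rightarrow> (nat \<Rightarrow> nat \<Rightarrow> complex) \<Rightarrow> (nat \<Rightarrow> complex) \<Rightarrow> (nat \<Rightarrow> complex) \<Rightarrow> complex" where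
  "sesq_form n B u v = (\<Sum>i<n. \<Sum>j<n. cnj (u i) * B i j * v j)"

abbreviation quad_form :: "nat \<Rightarrow> (nat \<Rightarrow> nat \<Rightarrow> complex) \<Rightarrow> (nat \<Rightarrow> complex) \<Rightarrow> complex" where
  "quad_form n B v \<equiv> sesq_form n B v v"

definition psd_fun :: "nat \<Rightarrow> (nat \<Rightarrow> nat \<Rightarrow> complex) \<Rightarrow> bool" where
  "psd_fun n B \<longleftrightarrow> hermitian_fun n B \<and> (\<forall>v. 0 \<le> Re (quad_form n B v))"

definition trace_prod :: "nat \<Rightarrow> (nat \<Rightarrow> nat \<Rightarrow> complex) \<Rightarrow> (nat \<Rightarrow> nat \<Rightarrow> complex) \<Rightarrow> complex" where
  "trace_prod n A B = (\<Sum>i<n. \<Sum>j<n. A i j * B j i)"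

lemma psd_fun_hermitian: "psd_fun n B \<Longrightarrow> i < n \<Longrightarrow> j < n \<Longrightarrow> B i j = cnj (B j i)"
  unfolding psd_fun_def hermitian_fun_def by blast

lemma psd_fun_quad_form_nonneg: "psd_fun n B \<Longrightarrow> 0 \<le> Re (quad_form n B v)"
  unfolding psd_fun_def by blast

lemma sesq_form_diff_left: "sesq_form n B (\<lambda>i. u i - u' i) v = sesq_form n B u v - sesq_form n B u' v"
  by (simp add: sesq_form_def ring_distribs sum_subtractf)

lemma sesq_form_diff_right: "sesq_form n B u (\<lambda>i. v i - v' i) = sesq_form n B u v - sesq_form n B u v'"
  by (simp add: sesq_form_def ring_distribs sum_subtractf)

lemma sum_lessThan_mult_delta:
  fixes n :: nat
  assumes "s < n"
  shows "(\<Sum>j<n. f j * (if j = s then c else 0)) = f s * (c::complex)"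
proof -
  have "(\<Sum>j<n. f j * (if j = s then c else 0)) = (\<Sum>j<n. if j = s then f s * c else 0)"
    by (intro sum.cong) auto
  thus ?thesis using assms by (subst (asm) sum.delta) auto
qed

lemma sesq_form_delta_right:
  "s < n \<Longrightarrow> sesq_form n B u (\<lambda>j. if j = s then c else 0) = (\<Sum>i<n. cnj (u i) * B i s) * c"
  unfolding sesq_form_def by (simp add: sum_lessThan_mult_delta sum_distrib_right)

lemma sesq_form_delta_left:
  assumes "s < n"
  shows "sesq_form n B (\<lambda>j. if j = s then c else 0) v = cnj c * (\<Sum>j<n. B s j * v j)"
proof -
  have "sesq_form n B (\<lambda>j. if j = s then c else 0) v
      = (\<Sum>i<n. (\<Sum>j<n. B i j * v j) * (if i = s then cnj c else 0))"
    unfolding sesq_form_def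
    by (intro sum.cong) (auto simp: sum_distrib_left sum_distrib_right algebra_simps)
  also have "\<dots> = (\<Sum>j<n. B s j * v j) * cnj c" by (rule sum_lessThan_mult_delta[OF assms])
  finally show ?thesis by (simp add: mult.commute)
qed

lemma quad_form_two_points:
  assumes "s < n" "j < n" "s \<noteq> j"
  shows "quad_form n B (\<lambda>i. if i = s then x else if i = j then y else 0) =
    cnj x * B s s * x + cnj x * B s j * y + cnj y * B j s * x + cnj y * B j j * y"
proof -
  let ?v = "\<lambda>i. if i = s then x else if i = j then y else 0"
  have "(\<Sum>l<n. cnj (?v i) * B i l * ?v l) = cnj (?v i) * B i s * x + cnj (?v i) * B i j * y" for i
  proof -
    have "(\<Sum>l<n. cnj (?v i) * B i l * ?v l) = (\<Sum>l\<in>{s,j}. cnj (?v i) * B i l * ?v l)"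
      using assms by (intro sum.mono_neutral_right) auto
    thus ?thesis using assms by simp
  qed
  hence "quad_form n B ?v = (\<Sum>i<n. cnj (?v i) * B i s * x + cnj (?v i) * B i j * y)"
    unfolding sesq_form_def by simp
  also have "\<dots> = (\<Sum>i\<in>{s,j}. cnj (?v i) * B i s * x + cnj (?v i) * B i j * y)"
    using assms by (intro sum.mono_neutral_right) auto
  finally show ?thesis using assms by (simp add: add.assoc)
qed

lemma psd_fun_diag:
  assumes "psd_fun n B" "s < n"
  shows "B s s = complex_of_real (Re (B s s))" "0 \<le> Re (B s s)"
proof -
  show "B s s = complex_of_real (Re (B s s))"
    using psd_fun_hermitian[OF assms(1,2,2)] by (metis Reals_cnj_iff of_real_Re)
  have "(\<Sum>j<n. cnj (if i = s then 1 else 0) * B i j * (if j = s then 1 else 0)) =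
      (if i = s then B s s else 0)" for i
    using assms(2) by (simp add: if_distrib cong: if_cong)
  hence "quad_form n B (\<lambda>i. if i = s then 1 else 0) = B s s"
    unfolding sesq_form_def using assms(2) by simp
  thus "0 \<le> Re (B s s)" using psd_fun_quad_form_nonneg[OF assms(1)] by metis
qed

lemma psd_fun_zero_diag_row:
  assumes P: "psd_fun n B" and s: "s < n" and z: "B s s = 0" and j: "j < n"
  shows "B s j = 0"
proof (rule ccontr)
  assume nz: "B s j \<noteq> 0"
  hence sj: "s \<noteq> j" using z by auto
  define c2 where "c2 = (cmod (B s j))\<^sup>2"
  have c2: "c2 > 0" using nz by (simp add: c2_def)
  have cc: "cnj (B s j) * B s j = complex_of_real c2"
    unfolding c2_def by (metis complex_norm_square mult.commute)
  text \<open>Probe along \<open>e\<^sub>j - t B\<^sub>s\<^sub>j e\<^sub>s\<close>: the form is affine in \<open>t\<close> with negative slope.\<close>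
  define t where "t = (\<bar>Re (B j j)\<bar> + 1) / (2 * c2)"
  have "0 \<le> Re (quad_form n B (\<lambda>i. if i = s then - complex_of_real t * B s j else if i = j then 1 else 0))"
    by (rule psd_fun_quad_form_nonneg[OF P])
  also have "quad_form n B (\<lambda>i. if i = s then - complex_of_real t * B s j else if i = j then 1 else 0)
     = B j j - 2 * complex_of_real t * complex_of_real c2"
    unfolding quad_form_two_points[OF s j sj] z psd_fun_hermitian[OF P j s] cc[symmetric]
    by (simp add: algebra_simps)
  finally have "0 \<le> Re (B j j) - 2 * t * c2" by simp
  moreover have "2 * t * c2 = \<bar>Re (B j j)\<bar> + 1" using c2 by (simp add: t_def)
  ultimately show False by linarith
qed

definition schur_compl :: "(nat \<Rightarrow> nat \<Rightarrow> complex) \<Rightarrow> nat \<Rightarrow> nat \<Rightarrow> nat \<Rightarrow> complex" where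
  "schur_compl B s i j = B i j - B i s * B s j / B s s"

definition vanishes_outside :: "nat \<Rightarrow> nat set \<Rightarrow> (nat \<Rightarrow> nat \<Rightarrow> complex) \<Rightarrow> bool" where
  "vanishes_outside n S B \<longleftrightarrow> (\<forall>i<n. \<forall>j<n. (i \<notin> S \<or> j \<notin> S) \<longrightarrow> B i j = 0)"

lemma quad_form_schur_compl:
  assumes H: "hermitian_fun n B" and s: "s < n" and b: "B s s \<noteq> 0"
  shows "quad_form n (schur_compl B s) v =
    quad_form n B (\<lambda>i. v i - (if i = s then (\<Sum>j<n. B s j * v j) / B s s else 0))"
proof -
  let ?b = "B s s"
  have Hs: "B i s = cnj (B s i)" if "i < n" for i
    using H that s unfolding hermitian_fun_def by blast
  have bc: "cnj ?b = ?b" using Hs[OF s] by simp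
  define y where "y = (\<Sum>j<n. B s j * v j)"
  have y': "(\<Sum>i<n. cnj (v i) * B i s) = cnj y"
    unfolding y_def by (auto simp: Hs intro!: sum.cong)
  define c where "c = y / ?b"
  let ?e = "\<lambda>j. if j = s then c else 0"
  have "quad_form n (schur_compl B s) v =
      sesq_form n B v v - (\<Sum>i<n. \<Sum>j<n. (cnj (v i) * B i s) * (B s j * v j)) / ?b"
    unfolding sesq_form_def schur_compl_def
    by (simp add: ring_distribs sum_subtractf sum_divide_distrib algebra_simps)
  also have "\<dots> = sesq_form n B v v - cnj y * y / ?b"
    unfolding sum_product[symmetric] y' y_def by simp
  also have "\<dots> = sesq_form n B v v - cnj y * c - (cnj c * y - cnj c * (?b * c))"
    unfolding c_def using b bc by (simp add: field_simps)
  also have "\<dots> = sesq_form n B v v - sesq_form n B v ?e - (sesq_form n B ?e v - sesq_form n B ?e ?e)"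
    unfolding sesq_form_delta_left[OF s] unfolding sesq_form_delta_right[OF s] y' y_def
    using sum_lessThan_mult_delta[OF s, of "B s" c] by simp
  also have "\<dots> = quad_form n B (\<lambda>i. v i - ?e i)"
    unfolding sesq_form_diff_left sesq_form_diff_right by simp
  finally show ?thesis unfolding c_def y_def by (simp add: if_distrib cong: if_cong)
qed

lemma psd_fun_schur_compl:
  assumes P: "psd_fun n B" and s: "s < n" and b: "B s s \<noteq> 0"
  shows "psd_fun n (schur_compl B s)"
proof -
  have "hermitian_fun n (schur_compl B s)"
    unfolding hermitian_fun_def
  proof (intro allI impI)
    fix i j assume "i < n" "j < n"
    thus "schur_compl B s i j = cnj (schur_compl B s j i)"
      using psd_fun_hermitian[OF P \<open>i < n\<close> \<open>j < n\<close>] psd_fun_hermitian[OF P \<open>i < n\<close> s]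
        psd_fun_hermitian[OF P s \<open>j < n\<close>] psd_fun_hermitian[OF P s s]
      by (simp add: schur_compl_def mult.commute)
  qed
  moreover have "hermitian_fun n B" using P by (simp add: psd_fun_def)
  ultimately show ?thesis
    using quad_form_schur_compl[OF \<open>hermitian_fun n B\<close> s b] psd_fun_quad_form_nonneg[OF P]
    by (simp add: psd_fun_def)
qed

lemma vanishes_outside_schur_compl:
  assumes "vanishes_outside n (insert s S) B" "s < n" "B s s \<noteq> 0"
  shows "vanishes_outside n S (schur_compl B s)"
  unfolding vanishes_outside_def
proof (intro allI impI)
  fix i j assume ij: "i < n" "j < n" "i \<notin> S \<or> j \<notin> S"
  show "schur_compl B s i j = 0"
  proof (cases "i = s \<or> j = s")
    case True thus ?thesis using assms(3) by (auto simp: schur_compl_def)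
  next
    case False
    hence "B i j = 0" "B i s = 0 \<or> B s j = 0"
      using assms(1,2) ij unfolding vanishes_outside_def by auto
    thus ?thesis by (auto simp: schur_compl_def)
  qed
qed

lemma vanishes_outside_zero_diag:
  assumes P: "psd_fun n B" and "vanishes_outside n (insert s S) B" "s < n" "B s s = 0"
  shows "vanishes_outside n S B"
proof -
  have "B s j = 0" "B j s = 0" if "j < n" for j
    using psd_fun_zero_diag_row[OF P \<open>s < n\<close> \<open>B s s = 0\<close> that]
      psd_fun_hermitian[OF P that \<open>s < n\<close>] by simp_all
  thus ?thesis using assms(2) unfolding vanishes_outside_def by auto
qed

lemma trace_prod_schur_split:
  assumes P: "psd_fun n B" and s: "s < n"
  shows "trace_prod n A B = trace_prod n A (schur_compl B s) + quad_form n A (\<lambda>j. B j s) / B s s"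
proof -
  have "trace_prod n A B = trace_prod n A (schur_compl B s) +
     (\<Sum>i<n. \<Sum>j<n. A i j * (B j s * B s i / B s s))"
    unfolding trace_prod_def schur_compl_def
    by (simp add: ring_distribs sum_subtractf sum.distrib[symmetric])
  also have "(\<Sum>i<n. \<Sum>j<n. A i j * (B j s * B s i / B s s)) = quad_form n A (\<lambda>j. B j s) / B s s"
    unfolding sesq_form_def sum_divide_distrib
  proof (intro sum.cong refl)
    fix i j assume "i \<in> {..<n}" "j \<in> {..<n}"
    thus "A i j * (B j s * B s i / B s s) = cnj (B i s) * A i j * B j s / B s s"
      using psd_fun_hermitian[OF P s, of i] by simp
  qed
  finally show ?thesis .
qed

text \<open>Each Schur complement step splits off the rank-one part \<open>B e\<^sub>s (B e\<^sub>s)\<^sup>* / B\<^sub>s\<^sub>s\<close>, whose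
  pairing with \<open>A\<close> is a value of the quadratic form of \<open>A\<close>, and shrinks the support of \<open>B\<close>.\<close>

lemma trace_prod_nonneg_vanishes_outside:
  assumes A: "psd_fun n A" and "finite S"
  shows "S \<subseteq> {..<n} \<Longrightarrow> psd_fun n B \<Longrightarrow> vanishes_outside n S B \<Longrightarrow> 0 \<le> Re (trace_prod n A B)"
  using \<open>finite S\<close>
proof (induction S arbitrary: B rule: finite_induct)
  case empty
  thus ?case by (simp add: trace_prod_def vanishes_outside_def)
next
  case (insert s S B)
  have s: "s < n" using insert by auto
  show ?case
  proof (cases "B s s = 0")
    case True
    thus ?thesis using insert vanishes_outside_zero_diag[OF insert(5) insert(6) s] by auto
  next
    case False
    have "0 \<le> Re (trace_prod n A (schur_compl B s))"
      using insert psd_fun_schur_compl[OF insert(5) s False]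
        vanishes_outside_schur_compl[OF insert(6) s False] by auto
    moreover have "0 \<le> Re (quad_form n A (\<lambda>j. B j s) / B s s)"
      using psd_fun_diag[OF insert(5) s] psd_fun_quad_form_nonneg[OF A]
      by (metis Re_divide_of_real divide_nonneg_nonneg)
    ultimately show ?thesis unfolding trace_prod_schur_split[OF insert(5) s] by simp
  qed
qed

lemma trace_prod_nonneg: "psd_fun n A \<Longrightarrow> psd_fun n B \<Longrightarrow> 0 \<le> Re (trace_prod n A B)"
  by (rule trace_prod_nonneg_vanishes_outside[of n A "{..<n}"]) (auto simp: vanishes_outside_def)

lemma trace_prod_real:
  assumes "hermitian_fun n A" "hermitian_fun n B"
  shows "Im (trace_prod n A B) = 0"
proof -
  have "cnj (trace_prod n A B) = (\<Sum>i<n. \<Sum>j<n. A j i * B i j)"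
    unfolding trace_prod_def cnj_sum
  proof (intro sum.cong refl)
    fix i j assume "i \<in> {..<n}" "j \<in> {..<n}"
    hence "A i j = cnj (A j i)" "B j i = cnj (B i j)" using assms unfolding hermitian_fun_def by blast+
    thus "cnj (A i j * B j i) = A j i * B i j" by simp
  qed
  also have "\<dots> = trace_prod n A B"
    unfolding trace_prod_def by (subst sum.swap) (simp add: mult.commute)
  finally show ?thesis by (metis Reals_cnj_iff complex_is_Real_iff)
qed

lemma psd_carrier: "psd n A \<Longrightarrow> A \<in> carrier_mat n n"
  by (simp add: psd_def hermitian_def)

lemma psd_imp_psd_fun:
  assumes "psd n A"
  shows "psd_fun n (\<lambda>i j. A $$ (i, j))"
proof -
  have Ac: "A \<in> carrier_mat n n" and H: "cadj A = A" using assms by (auto simp: psd_def hermitian_def)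
  have "hermitian_fun n (\<lambda>i j. A $$ (i, j))"
    unfolding hermitian_fun_def
  proof (intro allI impI)
    fix i j assume "i < n" "j < n"
    thus "A $$ (i, j) = cnj (A $$ (j, i))"
      using arg_cong[OF H, of "\<lambda>B. B $$ (i, j)"] Ac by (simp add: cadj_def)
  qed
  moreover have "0 \<le> Re (quad_form n (\<lambda>i j. A $$ (i, j)) v)" for v
  proof -
    have "cinner (vec n v) (A *\<^sub>v vec n v) = quad_form n (\<lambda>i j. A $$ (i, j)) v"
      unfolding cinner_def sesq_form_def using Ac
      by (auto simp: scalar_prod_def lessThan_atLeast0 sum_distrib_left mult.assoc intro!: sum.cong)
    thus ?thesis using assms vec_carrier unfolding psd_def by metis
  qed
  ultimately show ?thesis by (simp add: psd_fun_def)
qed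

lemma mtrace_mult_eq_trace_prod:
  assumes "A \<in> carrier_mat n n" "B \<in> carrier_mat n n"
  shows "mtrace (A * B) = trace_prod n (\<lambda>i j. A $$ (i, j)) (\<lambda>i j. B $$ (i, j))"
  unfolding mtrace_def trace_prod_def using assms index_mult_mat_sum[OF assms]
  by (auto intro!: sum.cong)

lemma mtrace_mult_psd:
  assumes "psd n A" "psd n B"
  shows "Im (mtrace (A * B)) = 0" "0 \<le> Re (mtrace (A * B))"
  using mtrace_mult_eq_trace_prod[OF psd_carrier[OF assms(1)] psd_carrier[OF assms(2)]]
    trace_prod_real trace_prod_nonneg psd_imp_psd_fun[OF assms(1)] psd_imp_psd_fun[OF assms(2)]
  by (auto simp: psd_fun_def)


section \<open>Measurements and channels\<close>

lemma meas_rdiag: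
  assumes "psd n \<omega>" "povm n k M"
  shows "meas k M \<omega> = rdiag k (\<lambda>x. Re (mtrace (\<omega> * M x)))"
proof (rule eq_matI)
  fix i j assume "i < dim_row (rdiag k (\<lambda>x. Re (mtrace (\<omega> * M x))))"
    "j < dim_col (rdiag k (\<lambda>x. Re (mtrace (\<omega> * M x))))"
  hence ij: "i < k" "j < k" by auto
  have "Im (mtrace (\<omega> * M i)) = 0"
    using mtrace_mult_psd(1)[OF assms(1)] assms(2) ij by (simp add: povm_def)
  hence "complex_of_real (Re (mtrace (\<omega> * M i))) = mtrace (\<omega> * M i)"
    by (simp add: complex_eq_iff)
  thus "meas k M \<omega> $$ (i, j) = rdiag k (\<lambda>x. Re (mtrace (\<omega> * M x))) $$ (i, j)"
    using ij by (cases "i = j") (auto simp: meas_def rdiag_def)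
qed (auto simp: meas_def)

lemma qrel_ent_meas:
  assumes "psd n \<rho>" "psd n \<tau>" "povm n k M"
  shows "qrel_ent (meas k M \<rho>) (meas k M \<tau>) =
     (\<Sum>x<k. kl_term (Re (mtrace (\<rho> * M x))) (Re (mtrace (\<tau> * M x))))"
  unfolding meas_rdiag[OF assms(1,3)] meas_rdiag[OF assms(2,3)]
  using assms mtrace_mult_psd(2) by (intro qrel_ent_rdiag) (auto simp: povm_def)

lemma channel_carrier: "channel n m N \<Longrightarrow> X \<in> carrier_mat n n \<Longrightarrow> N X \<in> carrier_mat m m"
  unfolding channel_def by blast

lemma channel_add:
  "channel n m N \<Longrightarrow> X \<in> carrier_mat n n \<Longrightarrow> Y \<in> carrier_mat n n \<Longrightarrow> N (X + Y) = N X + N Y"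
  unfolding channel_def by blast

lemma channel_smult: "channel n m N \<Longrightarrow> X \<in> carrier_mat n n \<Longrightarrow> N (c \<cdot>\<^sub>m X) = c \<cdot>\<^sub>m N X"
  unfolding channel_def by blast

lemma blockapply_one:
  assumes "channel n m N" "X \<in> carrier_mat n n"
  shows "blockapply 1 n m N X = N X"
proof -
  have "mat n n (\<lambda>(a, b). X $$ (a, b)) = X"
    by (rule eq_matI) (use assms in auto)
  thus ?thesis
    using channel_carrier[OF assms] by (intro eq_matI) (auto simp: blockapply_def)
qed

lemma channel_psd:
  assumes "channel n m N" "psd n X"
  shows "psd m (N X)"
proof -
  have "psd (1 * m) (blockapply 1 n m N X)"
    using assms unfolding channel_def by (metis mult_1)
  thus ?thesis using blockapply_one[OF assms(1) psd_carrier[OF assms(2)]] by simp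
qed

definition mat_restrict :: "nat \<Rightarrow> (nat \<times> nat) set \<Rightarrow> complex mat \<Rightarrow> complex mat" where
  "mat_restrict n S Y = mat n n (\<lambda>(a, b). if (a, b) \<in> S then Y $$ (a, b) else 0)"

lemma channel_mat_restrict_entry:
  assumes T: "channel m n T" and i: "i < n" and j: "j < n" and fin: "finite S"
  shows "T (mat_restrict m S Y) $$ (i, j) = (\<Sum>(a, b)\<in>S. Y $$ (a, b) * T (mat_unit m a b) $$ (i, j))"
  using fin
proof (induction S rule: finite_induct)
  case empty
  have z: "mat_restrict m {} Y = 0 \<cdot>\<^sub>m 0\<^sub>m m m" by (rule eq_matI) (auto simp: mat_restrict_def)
  have "T (mat_restrict m {} Y) = 0 \<cdot>\<^sub>m T (0\<^sub>m m m)" unfolding z by (rule channel_smult[OF T]) simp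
  moreover have "T (0\<^sub>m m m) \<in> carrier_mat n n" using channel_carrier[OF T] by simp
  ultimately show ?case using i j by simp
next
  case (insert x S)
  obtain a b where x: "x = (a, b)" by (cases x)
  have eq: "mat_restrict m (insert x S) Y = (Y $$ (a, b)) \<cdot>\<^sub>m mat_unit m a b + mat_restrict m S Y"
    by (rule eq_matI) (use insert(2) in \<open>auto simp: mat_restrict_def mat_unit_def x\<close>)
  have c1: "mat_unit m a b \<in> carrier_mat m m" by (simp add: mat_unit_def)
  have c2: "mat_restrict m S Y \<in> carrier_mat m m" by (simp add: mat_restrict_def)
  have "T (mat_restrict m (insert x S) Y) = (Y $$ (a, b)) \<cdot>\<^sub>m T (mat_unit m a b) + T (mat_restrict m S Y)"
    unfolding eq using channel_add[OF T _ c2] channel_smult[OF T c1] c1 by simp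
  moreover have "T (mat_unit m a b) \<in> carrier_mat n n" "T (mat_restrict m S Y) \<in> carrier_mat n n"
    using channel_carrier[OF T] c1 c2 by auto
  ultimately show ?case using insert i j x by simp
qed

lemma channel_entry_expansion:
  assumes T: "channel m n T" and "i < n" "j < n" and Y: "Y \<in> carrier_mat m m"
  shows "T Y $$ (i, j) = (\<Sum>a<m. \<Sum>b<m. Y $$ (a, b) * T (mat_unit m a b) $$ (i, j))"
proof -
  have "mat_restrict m ({..<m} \<times> {..<m}) Y = Y"
    by (rule eq_matI) (use Y in \<open>auto simp: mat_restrict_def\<close>)
  thus ?thesis
    using channel_mat_restrict_entry[OF assms(1-3), of "{..<m} \<times> {..<m}" Y]
    by (simp add: sum.cartesian_product)
qed

section \<open>Continuity in the channel\<close>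

definition dist_nhds :: "'a set \<Rightarrow> ('a \<Rightarrow> 'a \<Rightarrow> real) \<Rightarrow> 'a \<Rightarrow> 'a filter" where
  "dist_nhds S d x = (INF e\<in>{0<..}. principal {y \<in> S. d x y < e})"

lemma eventually_dist_nhds:
  "eventually P (dist_nhds S d x) \<longleftrightarrow> (\<exists>e>0. \<forall>y\<in>S. d x y < e \<longrightarrow> P y)"
proof -
  have "\<exists>c\<in>{0<..}. principal {y \<in> S. d x y < c}
      \<le> inf (principal {y \<in> S. d x y < a}) (principal {y \<in> S. d x y < b})"
    if "a \<in> {0::real<..}" "b \<in> {0<..}" for a b
    using that by (intro bexI[of _ "min a b"]) auto
  thus ?thesis
    unfolding dist_nhds_def by (subst eventually_INF_base) (auto simp: eventually_principal)
qed

lemma usc_on_iff_eventually: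
  "usc_on S d f \<longleftrightarrow> (\<forall>x\<in>S. \<forall>c. f x < c \<longrightarrow> eventually (\<lambda>y. f y < c) (dist_nhds S d x))"
  unfolding usc_on_def eventually_dist_nhds ..

lemma tendsto_channel_unit_entry:
  assumes "a < m" "b < m" "i < n" "j < n"
  shows "((\<lambda>T. T (mat_unit m a b) $$ (i, j)) \<longlongrightarrow> T0 (mat_unit m a b) $$ (i, j))
    (dist_nhds {T. channel m n T} (chan_dist m n) T0)"
proof (rule tendstoI)
  fix e :: real assume "e > 0"
  have bound: "dist (T (mat_unit m a b) $$ (i, j)) (T0 (mat_unit m a b) $$ (i, j)) \<le> chan_dist m n T0 T" for T
  proof -
    let ?f = "\<lambda>a b i j. cmod (T0 (mat_unit m a b) $$ (i, j) - T (mat_unit m a b) $$ (i, j))"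
    have "?f a b i j \<le> (\<Sum>j<n. ?f a b i j)"
      using assms by (intro member_le_sum) auto
    also have "\<dots> \<le> (\<Sum>i<n. \<Sum>j<n. ?f a b i j)"
      using assms by (intro member_le_sum[of _ _ "\<lambda>i. \<Sum>j<n. ?f a b i j"] sum_nonneg) auto
    also have "\<dots> \<le> (\<Sum>b<m. \<Sum>i<n. \<Sum>j<n. ?f a b i j)"
      using assms by (intro member_le_sum[of _ _ "\<lambda>b. \<Sum>i<n. \<Sum>j<n. ?f a b i j"] sum_nonneg) auto
    also have "\<dots> \<le> chan_dist m n T0 T"
      unfolding chan_dist_def using assms
      by (intro member_le_sum[of _ _ "\<lambda>a. \<Sum>b<m. \<Sum>i<n. \<Sum>j<n. ?f a b i j"] sum_nonneg) auto
    finally show ?thesis by (simp add: dist_norm norm_minus_commute)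
  qed
  thus "eventually (\<lambda>T. dist (T (mat_unit m a b) $$ (i, j)) (T0 (mat_unit m a b) $$ (i, j)) < e)
      (dist_nhds {T. channel m n T} (chan_dist m n) T0)"
    unfolding eventually_dist_nhds
  proof (intro exI[of _ e] conjI ballI impI)
    fix T assume "chan_dist m n T0 T < e"
    thus "dist (T (mat_unit m a b) $$ (i, j)) (T0 (mat_unit m a b) $$ (i, j)) < e"
      using bound[of T] by linarith
  qed (rule \<open>e > 0\<close>)
qed

text \<open>Channels are linear, so the coordinates \<open>T(E\<^sub>a\<^sub>b)\<^sub>i\<^sub>j\<close> compared by \<open>chan_dist\<close> determine
  \<open>T Y\<close> linearly.\<close>

lemma tendsto_channel_mtrace:
  assumes T0: "channel m n T0" and Y: "Y \<in> carrier_mat m m" and M: "M \<in> carrier_mat n n"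
  shows "((\<lambda>T. Re (mtrace (T Y * M))) \<longlongrightarrow> Re (mtrace (T0 Y * M)))
    (dist_nhds {T. channel m n T} (chan_dist m n) T0)" (is "(_ \<longlongrightarrow> _) ?F")
proof -
  define g where "g T = (\<Sum>i<n. \<Sum>j<n.
      (\<Sum>a<m. \<Sum>b<m. Y $$ (a, b) * T (mat_unit m a b) $$ (i, j)) * M $$ (j, i))" for T
  have g: "mtrace (T Y * M) = g T" if "channel m n T" for T
    unfolding mtrace_mult_eq_trace_prod[OF channel_carrier[OF that Y] M] trace_prod_def g_def
    using channel_entry_expansion[OF that _ _ Y] by simp
  have "(g \<longlongrightarrow> g T0) ?F"
    unfolding g_def by (intro tendsto_intros tendsto_channel_unit_entry) auto
  moreover have "eventually (\<lambda>T. g T = mtrace (T Y * M)) ?F"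
    unfolding eventually_dist_nhds using g by (intro exI[of _ 1]) auto
  ultimately have "((\<lambda>T. mtrace (T Y * M)) \<longlongrightarrow> mtrace (T0 Y * M)) ?F"
    unfolding g[OF T0] by (rule Lim_transform_eventually)
  thus ?thesis by (rule tendsto_Re)
qed

lemma tendsto_kl_term_zero:
  assumes p: "0 < p" and lim: "(q \<longlongrightarrow> 0) F" and nonneg: "eventually (\<lambda>x. 0 \<le> q x) F"
  shows "((\<lambda>x. kl_term p (q x)) \<longlongrightarrow> \<infinity>) F"
  unfolding tendsto_PInfty
proof
  fix r
  have "eventually (\<lambda>x. q x < exp (ln p - r / p)) F"
    using order_tendstoD(2)[OF lim] by simp
  thus "eventually (\<lambda>x. ereal r < kl_term p (q x)) F" using nonneg
  proof eventually_elim
    case (elim x)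
    show ?case
    proof (cases "q x = 0")
      case False
      hence "0 < q x" using elim by simp
      hence "ln (q x) < ln p - r / p"
        using ln_less_cancel_iff[of "q x" "exp (ln p - r / p)"] elim by simp
      hence "r < p * (ln p - ln (q x))" using p by (simp add: field_simps)
      thus ?thesis using False p by (simp add: kl_term_def)
    qed (use p in \<open>simp add: kl_term_def\<close>)
  qed
qed

lemma tendsto_kl_term:
  assumes p: "0 \<le> p" and q0: "0 \<le> q0" and lim: "(q \<longlongrightarrow> q0) F"
    and nonneg: "eventually (\<lambda>x. 0 \<le> q x) F"
  shows "((\<lambda>x. kl_term p (q x)) \<longlongrightarrow> kl_term p q0) F"
proof (cases "p = 0 \<or> q0 = 0")
  case True
  thus ?thesis
    using tendsto_kl_term_zero[of p q F] p lim nonneg by (auto simp: kl_term_def)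
next
  case False
  hence "0 < p" "0 < q0" using p q0 by auto
  hence "((\<lambda>x. ereal (p * (ln p - ln (q x)))) \<longlongrightarrow> ereal (p * (ln p - ln q0))) F"
    by (intro tendsto_intros lim) auto
  moreover have "eventually (\<lambda>x. ereal (p * (ln p - ln (q x))) = kl_term p (q x)) F"
    using order_tendstoD(1)[OF lim \<open>0 < q0\<close>] by eventually_elim (use \<open>0 < p\<close> in \<open>simp add: kl_term_def\<close>)
  ultimately have "((\<lambda>x. kl_term p (q x)) \<longlongrightarrow> ereal (p * (ln p - ln q0))) F"
    by (rule Lim_transform_eventually)
  thus ?thesis using False by (simp add: kl_term_def)
qed

lemma tendsto_sum_ereal_not_MInfty:
  fixes f :: "'i \<Rightarrow> 'a \<Rightarrow> ereal"
  assumes "finite I" "\<And>i. i \<in> I \<Longrightarrow> (f i \<longlongrightarrow> a i) F" "\<And>i. i \<in> I \<Longrightarrow> a i \<noteq> -\<infinity>"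
  shows "((\<lambda>x. \<Sum>i\<in>I. f i x) \<longlongrightarrow> (\<Sum>i\<in>I. a i)) F"
proof -
  have "(\<Sum>i\<in>I. a i) \<noteq> -\<infinity> \<and> ((\<lambda>x. \<Sum>i\<in>I. f i x) \<longlongrightarrow> (\<Sum>i\<in>I. a i)) F"
    using assms
  proof (induction I rule: finite_induct)
    case (insert i I)
    hence "a i \<noteq> -\<infinity>" "(\<Sum>i\<in>I. a i) \<noteq> -\<infinity>" "(f i \<longlongrightarrow> a i) F"
      "((\<lambda>x. \<Sum>i\<in>I. f i x) \<longlongrightarrow> (\<Sum>i\<in>I. a i)) F" by simp_all
    thus ?case
      using insert.hyps tendsto_add_ereal_nonneg[of "a i" "\<Sum>i\<in>I. a i" "f i"] by simp
  qed simp
  thus ?thesis ..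
qed

lemma eventually_less_SUP_of_tendsto:
  fixes g :: "'i \<Rightarrow> 'a \<Rightarrow> 'b::{complete_linorder, linorder_topology}"
  assumes "\<And>i. i \<in> I \<Longrightarrow> (g i \<longlongrightarrow> g i x0) F" and "s < (SUP i\<in>I. g i x0)"
  shows "eventually (\<lambda>x. s < (SUP i\<in>I. g i x)) F"
proof -
  obtain i where i: "i \<in> I" "s < g i x0" using assms(2) by (auto simp: less_SUP_iff)
  have "eventually (\<lambda>x. s < g i x) F" using order_tendstoD(1)[OF assms(1)[OF i(1)] i(2)] .
  thus ?thesis
  proof (rule eventually_mono)
    fix x assume "s < g i x"
    thus "s < (SUP i\<in>I. g i x)" by (rule less_le_trans) (rule SUP_upper[OF i(1)])
  qed
qed

lemma tendsto_qrel_ent_meas_channel: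
  assumes \<rho>: "psd n \<rho>" and Y: "psd m Y" and M: "povm n k M" and T0: "channel m n T0"
  shows "((\<lambda>T. qrel_ent (meas k M \<rho>) (meas k M (T Y))) \<longlongrightarrow> qrel_ent (meas k M \<rho>) (meas k M (T0 Y)))
    (dist_nhds {T. channel m n T} (chan_dist m n) T0)" (is "(_ \<longlongrightarrow> _) ?F")
proof -
  have Mx: "psd n (M x)" if "x < k" for x using M that by (simp add: povm_def)
  let ?kl = "\<lambda>T. \<Sum>x<k. kl_term (Re (mtrace (\<rho> * M x))) (Re (mtrace (T Y * M x)))"
  have eq: "qrel_ent (meas k M \<rho>) (meas k M (T Y)) = ?kl T" if "channel m n T" for T
    using qrel_ent_meas[OF \<rho> channel_psd[OF that Y] M] .
  have "(?kl \<longlongrightarrow> ?kl T0) ?F"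
  proof (intro tendsto_sum_ereal_not_MInfty tendsto_kl_term tendsto_channel_mtrace)
    fix x assume "x \<in> {..<k}"
    hence x: "x < k" by simp
    show "0 \<le> Re (mtrace (\<rho> * M x))" "0 \<le> Re (mtrace (T0 Y * M x))"
      using mtrace_mult_psd(2) \<rho> channel_psd[OF T0 Y] Mx[OF x] by auto
    show "eventually (\<lambda>T. 0 \<le> Re (mtrace (T Y * M x))) ?F"
      unfolding eventually_dist_nhds
      using mtrace_mult_psd(2)[OF channel_psd[OF _ Y] Mx[OF x]] by (intro exI[of _ 1]) auto
    show "M x \<in> carrier_mat n n" using psd_carrier[OF Mx[OF x]] .
  qed (use T0 psd_carrier[OF Y] in auto)
  moreover have "eventually (\<lambda>T. ?kl T = qrel_ent (meas k M \<rho>) (meas k M (T Y))) ?F"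
    unfolding eventually_dist_nhds using eq by (intro exI[of _ 1]) auto
  ultimately show ?thesis
    unfolding eq[OF T0] by (rule Lim_transform_eventually)
qed

lemma eventually_less_meas_rel_ent_channel:
  assumes "psd n \<rho>" "psd m Y" "channel m n T0" "s < meas_rel_ent n \<rho> (T0 Y)"
  shows "eventually (\<lambda>T. s < meas_rel_ent n \<rho> (T Y)) (dist_nhds {T. channel m n T} (chan_dist m n) T0)"
  using assms(4) unfolding meas_rel_ent_def
proof (rule eventually_less_SUP_of_tendsto[rotated, where
      g = "\<lambda>kM T. case kM of (k, M) \<Rightarrow> qrel_ent (meas k M \<rho>) (meas k M (T Y))"])
  fix kM assume "kM \<in> {(k, M). povm n k M}"
  then obtain k M where "kM = (k, M)" "povm n k M" by blast
  thus "((\<lambda>T. case kM of (k, M) \<Rightarrow> qrel_ent (meas k M \<rho>) (meas k M (T Y)))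
      \<longlongrightarrow> (case kM of (k, M) \<Rightarrow> qrel_ent (meas k M \<rho>) (meas k M (T0 Y))))
      (dist_nhds {T. channel m n T} (chan_dist m n) T0)"
    using tendsto_qrel_ent_meas_channel[OF assms(1-2) _ assms(3)] by simp
qed

lemma ereal_minus_less_commute: "a - b < c \<Longrightarrow> (a::ereal) - c < b"
  by (cases a; cases b; cases c) auto

theorem lemma7:
  fixes n m :: nat and \<sigma> \<rho> :: "complex mat" and N :: "complex mat \<Rightarrow> complex mat"
  assumes "density n \<sigma>"
    and "density n \<rho>" and "supp \<rho> \<subseteq> supp \<sigma>"
    and "channel n m N"
  shows "usc_on {T. channel m n T} (chan_dist m n) (\<lambda>T. Delta n T \<sigma> N \<rho>)"
proof -
  have \<rho>: "psd n \<rho>" using assms(2) by (simp add: density_def)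
  have N\<rho>: "psd m (N \<rho>)" using channel_psd[OF assms(4) \<rho>] .
  let ?C = "qrel_ent \<rho> \<sigma> - qrel_ent (N \<rho>) (N \<sigma>)"
  show ?thesis
    unfolding usc_on_iff_eventually Delta_def
  proof (intro ballI allI impI)
    fix T0 c assume T0: "T0 \<in> {T. channel m n T}" and lt: "?C - meas_rel_ent n \<rho> (T0 (N \<rho>)) < c"
    from lt have "?C - c < meas_rel_ent n \<rho> (T0 (N \<rho>))" by (rule ereal_minus_less_commute)
    with T0 have "eventually (\<lambda>T. ?C - c < meas_rel_ent n \<rho> (T (N \<rho>)))
        (dist_nhds {T. channel m n T} (chan_dist m n) T0)"
      using eventually_less_meas_rel_ent_channel[OF \<rho> N\<rho>] by simp
    thus "eventually (\<lambda>T. ?C - meas_rel_ent n \<rho> (T (N \<rho>)) < c)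
        (dist_nhds {T. channel m n T} (chan_dist m n) T0)"
      by eventually_elim (rule ereal_minus_less_commute)
  qed
qed

end
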